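(* For any integer $t\geq 2$, there exist a connected graph $G$ and a function $g:V(G_1)\to V(G_2)$ such that $Dist(G)=t=Dist(F_G)$.
   Context: $Dist(H)$ is the least $t$ such that $H$ has a labeling $V(H)\to\{1,\dots,t\}$ preserved by no non-identity automorphism of $H$. Functigraph: for disjoint copies $G_1,G_2$ of a connected graph $G$ and a function $g:V(G_1)\to V(G_2)$, $F_G$ has vertex set $V(G_1)\cup V(G_2)$ and edge set $E(G_1)\cup E(G_2)\cup\{uv: u\in V(G_1),\ g(u)=v\}$. *)

theory Defs
  imports Main
begin

definition simple_graph :: "'a set \<Rightarrow> 'a set set \<Rightarrow> bool" where
  "simple_graph V E \<longleftrightarrow> finite V \<and>
     (\<forall>e\<in>E. \<exists>u v. e = {u, v} \<and> u \<noteq> v \<and> u \<in> V \<and> v \<in> V)"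

definition adj :: "'a set set \<Rightarrow> 'a \<Rightarrow> 'a \<Rightarrow> bool" where
  "adj E u v \<longleftrightarrow> {u, v} \<in> E"

definition connected_graph :: "'a set \<Rightarrow> 'a set set \<Rightarrow> bool" where
  "connected_graph V E \<longleftrightarrow> V \<noteq> {} \<and> (\<forall>u\<in>V. \<forall>v\<in>V. (adj E)\<^sup>*\<^sup>* u v)"

definition automorphism :: "'a set \<Rightarrow> 'a set set \<Rightarrow> ('a \<Rightarrow> 'a) \<Rightarrow> bool" where
  "automorphism V E f \<longleftrightarrow> bij_betw f V V \<and>
     (\<forall>u\<in>V. \<forall>v\<in>V. {u, v} \<in> E \<longleftrightarrow> {f u, f v} \<in> E)"

definition distinguishing :: "'a set \<Rightarrow> 'a set set \<Rightarrow> ('a \<Rightarrow> nat) \<Rightarrow> bool" where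
  "distinguishing V E c \<longleftrightarrow>
     (\<forall>f. automorphism V E f \<and> (\<forall>v\<in>V. c (f v) = c v) \<longrightarrow> (\<forall>v\<in>V. f v = v))"

definition Dist :: "'a set \<Rightarrow> 'a set set \<Rightarrow> nat" where
  "Dist V E = (LEAST t. \<exists>c. (\<forall>v\<in>V. c v \<in> {1..t}) \<and> distinguishing V E c)"

text \<open>Functigraph: copies G1 = Inl-copy and G2 = Inr-copy of G, plus edges u -- g(u).\<close>
definition fg_V :: "'a set \<Rightarrow> ('a + 'a) set" where
  "fg_V V = Inl ` V \<union> Inr ` V"

definition fg_E :: "'a set \<Rightarrow> 'a set set \<Rightarrow> ('a \<Rightarrow> 'a) \<Rightarrow> ('a + 'a) set set" where
  "fg_E V E g = (\<lambda>e. Inl ` e) ` E \<union> (\<lambda>e. Inr ` e) ` E \<union> {{Inl u, Inr (g u)} | u. u \<in> V}"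

end

theory Submission
  imports Defs "HOL-Combinatorics.Transposition"
begin

text \<open>Take the star with centre 0 and leaves 1, ..., t, and let g map every vertex of the first
copy to the centre of the second copy. In both the star and this functigraph there are t pairwise
twin vertices (the leaves of the star, resp. the leaves of the second copy), so a labeling with
fewer than t labels gives two twins the same label, and swapping them is a nontrivial
label-preserving automorphism. Conversely, labeling vertex i by max 1 i (in both copies) is
distinguishing: labels \<open>\<ge> 2\<close> pin down all but four vertices, and adjacency pins down the rest;
in the functigraph, a leaf of the second copy is pendant, whereas a leaf of the first copy is
adjacent to both centres, so the two copies cannot be interchanged.\<close>

lemma automorphism_edge:
  assumes "automorphism V E f" "u \<in> V" "v \<in> V" "{u, v} \<in> E"
  shows "{f u, f v} \<in> E"
  using assms unfolding automorphism_def by blast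

lemma automorphism_inj:
  assumes "automorphism V E f" "u \<in> V" "v \<in> V" "u \<noteq> v"
  shows "f u \<noteq> f v"
  using assms unfolding automorphism_def by (metis bij_betw_imp_inj_on inj_onD)

lemma automorphism_in:
  assumes "automorphism V E f" "v \<in> V"
  shows "f v \<in> V"
  using assms unfolding automorphism_def by (metis bij_betw_apply)

lemma transpose_twins_automorphism:
  assumes "a \<in> V" "b \<in> V" "{a} \<notin> E" "{b} \<notin> E"
    and twins: "\<And>w. w \<in> V \<Longrightarrow> w \<noteq> a \<Longrightarrow> w \<noteq> b \<Longrightarrow> {a, w} \<in> E \<longleftrightarrow> {b, w} \<in> E"
  shows "automorphism V E (transpose a b)"
  unfolding automorphism_def
proof (intro conjI ballI)
  show "bij_betw (transpose a b) V V" using assms by simp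
  have swap_one: "{x, w} \<in> E \<longleftrightarrow> {transpose a b x, w} \<in> E"
    if "x \<in> V" "w \<in> V" "w \<noteq> a" "w \<noteq> b" for x w
    using twins[OF that(2-4)] by (cases "x = a \<or> x = b") auto
  fix u v assume "u \<in> V" "v \<in> V"
  show "{u, v} \<in> E \<longleftrightarrow> {transpose a b u, transpose a b v} \<in> E"
  proof (cases "u \<in> {a, b} \<and> v \<in> {a, b}")
    case True
    then show ?thesis using assms(3,4) by (auto simp: insert_commute)
  next
    case False
    then consider "u \<notin> {a, b}" | "v \<notin> {a, b}" by blast
    then show ?thesis
    proof cases
      case 1
      then show ?thesis using swap_one[of v u] \<open>u \<in> V\<close> \<open>v \<in> V\<close> by (simp add: insert_commute)
    next
      case 2
      then show ?thesis using swap_one[of u v] \<open>u \<in> V\<close> \<open>v \<in> V\<close> by simp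
    qed
  qed
qed

lemma not_distinguishing_if_many_twins:
  assumes S: "finite S" "S \<subseteq> V" "s < card S"
    and twins: "\<And>a b. a \<in> S \<Longrightarrow> b \<in> S \<Longrightarrow> a \<noteq> b \<Longrightarrow> automorphism V E (transpose a b)"
    and c: "\<forall>v\<in>V. c v \<in> {1..s}"
  shows "\<not> distinguishing V E c"
proof
  assume dist: "distinguishing V E c"
  have "card (c ` S) \<le> s"
    using c S card_mono[of "{1..s}" "c ` S"] by fastforce
  with S have "\<not> inj_on c S" using card_image by fastforce
  then obtain a b where ab: "a \<in> S" "b \<in> S" "a \<noteq> b" "c a = c b"
    unfolding inj_on_def by blast
  then have "\<forall>v\<in>V. c (transpose a b v) = c v" by (simp add: transpose_def)
  with dist twins[OF ab(1-3)] have "\<forall>v\<in>V. transpose a b v = v"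
    unfolding distinguishing_def by blast
  then have "transpose a b a = a" using ab S by blast
  with ab show False by simp
qed

lemma Dist_eqI:
  assumes "\<forall>v\<in>V. c v \<in> {1..t}" "distinguishing V E c"
    and "\<And>s c. s < t \<Longrightarrow> \<forall>v\<in>V. c v \<in> {1..s} \<Longrightarrow> \<not> distinguishing V E c"
  shows "Dist V E = t"
  unfolding Dist_def using assms by (intro Least_equality) (blast, meson not_less)

definition star_edges :: "nat \<Rightarrow> nat set set" where
  "star_edges t = (\<lambda>i. {0, i}) ` {1..t}"

definition leaf_labeling :: "nat \<Rightarrow> nat" where
  "leaf_labeling x = max 1 x"

lemma star_edge_iff:
  "{x, y} \<in> star_edges t \<longleftrightarrow> (x = 0 \<and> y \<in> {1..t}) \<or> (y = 0 \<and> x \<in> {1..t})"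
  unfolding star_edges_def by (auto simp: doubleton_eq_iff)

lemma simple_graph_star: "simple_graph {0..t} (star_edges t)"
proof -
  have "\<exists>u v. {0, i} = {u, v} \<and> u \<noteq> v \<and> u \<in> {0..t} \<and> v \<in> {0..t}" if "i \<in> {1..t}" for i
    using that by force
  then show ?thesis unfolding simple_graph_def star_edges_def by blast
qed

lemma connected_graph_star: "connected_graph {0..t} (star_edges t)"
  unfolding connected_graph_def
proof (intro conjI ballI)
  show "{0..t} \<noteq> {}" by simp
  have to_centre: "(adj (star_edges t))\<^sup>*\<^sup>* u 0" "(adj (star_edges t))\<^sup>*\<^sup>* 0 u" if "u \<in> {0..t}" for u
    using that by (cases "u = 0"; force simp: adj_def star_edge_iff)+
  fix u v assume "u \<in> {0..t}" "v \<in> {0..t}"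
  then show "(adj (star_edges t))\<^sup>*\<^sup>* u v"
    using to_centre rtranclp_trans by metis
qed

lemma leaf_labeling_eq_iff:
  "leaf_labeling x = leaf_labeling y \<longleftrightarrow> x = y \<or> (x \<le> 1 \<and> y \<le> 1)"
  unfolding leaf_labeling_def by auto

lemma distinguishing_star:
  assumes "2 \<le> t"
  shows "distinguishing {0..t} (star_edges t) leaf_labeling"
  unfolding distinguishing_def
proof (intro allI impI)
  fix f assume "automorphism {0..t} (star_edges t) f \<and>
    (\<forall>v\<in>{0..t}. leaf_labeling (f v) = leaf_labeling v)"
  then have aut: "automorphism {0..t} (star_edges t) f"
    and pres: "\<And>v. v \<in> {0..t} \<Longrightarrow> f v = v \<or> (f v \<le> 1 \<and> v \<le> 1)"
    by (auto simp: leaf_labeling_eq_iff)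
  have large: "f i = i" if "2 \<le> i" "i \<le> t" for i
    using pres[of i] that by auto
  have small: "f v \<le> 1" if "v \<le> 1" for v
    using pres[of v] that assms by auto
  have "{f 0, f 2} \<in> star_edges t"
    using assms by (intro automorphism_edge[OF aut]) (auto simp: star_edge_iff)
  then have f0: "f 0 = 0" using small[of 0] large[of 2] assms by (auto simp: star_edge_iff)
  have f1: "f 1 = 1" using automorphism_inj[OF aut, of 1 0] small[of 1] f0 assms by auto
  show "\<forall>v\<in>{0..t}. f v = v"
  proof
    fix v assume "v \<in> {0..t}"
    then consider "v = 0" | "v = 1" | "2 \<le> v" "v \<le> t" by force
    then show "f v = v" using f0 f1 large by cases auto
  qed
qed

lemma Dist_star:
  assumes "2 \<le> t"
  shows "Dist {0..t} (star_edges t) = t"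
proof (rule Dist_eqI)
  show "\<forall>v\<in>{0..t}. leaf_labeling v \<in> {1..t}" using assms by (auto simp: leaf_labeling_def)
  show "distinguishing {0..t} (star_edges t) leaf_labeling" using distinguishing_star[OF assms] .
  fix s c assume "s < t" and c: "\<forall>v\<in>{0..t}. c v \<in> {1..s}"
  show "\<not> distinguishing {0..t} (star_edges t) c"
  proof (rule not_distinguishing_if_many_twins[of "{1..t}", OF _ _ _ _ c])
    fix a b assume ab: "a \<in> {1..t}" "b \<in> {1..t}"
    show "automorphism {0..t} (star_edges t) (transpose a b)"
    proof (rule transpose_twins_automorphism)
      show "a \<in> {0..t}" "b \<in> {0..t}" using ab by auto
      show "{a} \<notin> star_edges t" "{b} \<notin> star_edges t"
        using star_edge_iff[of a a t] star_edge_iff[of b b t] ab by auto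
      fix w assume "w \<noteq> a" "w \<noteq> b"
      then show "{a, w} \<in> star_edges t \<longleftrightarrow> {b, w} \<in> star_edges t"
        using ab by (simp add: star_edge_iff)
    qed
  qed (use \<open>s < t\<close> in simp_all)
qed

abbreviation star_fg_edges :: "nat \<Rightarrow> (nat + nat) set set" where
  "star_fg_edges t \<equiv> fg_E {0..t} (star_edges t) (\<lambda>_. 0)"

definition copy_labeling :: "nat + nat \<Rightarrow> nat" where
  "copy_labeling v = leaf_labeling (case_sum id id v)"

lemma Inl_in_fg_V [simp]: "Inl x \<in> fg_V V \<longleftrightarrow> x \<in> V"
  and Inr_in_fg_V [simp]: "Inr x \<in> fg_V V \<longleftrightarrow> x \<in> V"
  unfolding fg_V_def by auto

lemma fg_V_cases:
  assumes "v \<in> fg_V V"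
  obtains x where "x \<in> V" "v = Inl x" | x where "x \<in> V" "v = Inr x"
  using assms unfolding fg_V_def by blast

lemma star_fg_edge_iff:
  "{x, y} \<in> star_fg_edges t \<longleftrightarrow>
     (x = Inl 0 \<and> y \<in> Inl ` {1..t}) \<or> (y = Inl 0 \<and> x \<in> Inl ` {1..t}) \<or>
     (x = Inr 0 \<and> y \<in> Inr ` {1..t}) \<or> (y = Inr 0 \<and> x \<in> Inr ` {1..t}) \<or>
     (x = Inr 0 \<and> y \<in> Inl ` {0..t}) \<or> (y = Inr 0 \<and> x \<in> Inl ` {0..t})"
proof -
  have edges: "star_fg_edges t = (\<lambda>i. {Inl 0, Inl i}) ` {1..t} \<union> (\<lambda>i. {Inr 0, Inr i}) ` {1..t} \<union>
      (\<lambda>u. {Inl u, Inr 0}) ` {0..t}"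
    unfolding fg_E_def star_edges_def image_image
    by (simp add: setcompr_eq_image atLeast0AtMost atMost_def)
  show ?thesis unfolding edges image_iff Bex_def Un_iff doubleton_eq_iff by blast
qed

lemma star_fg_pendant: "i \<in> {1..t} \<Longrightarrow> {Inr i, w} \<in> star_fg_edges t \<longleftrightarrow> w = Inr 0"
  by (auto simp: star_fg_edge_iff)

context
  fixes t :: nat and f :: "nat + nat \<Rightarrow> nat + nat"
  assumes t: "2 \<le> t"
    and aut: "automorphism (fg_V {0..t}) (star_fg_edges t) f"
    and pres: "\<forall>v\<in>fg_V {0..t}. copy_labeling (f v) = copy_labeling v"
begin

lemma star_fg_aut_copies:
  assumes "x \<le> t" "v = Inl x \<or> v = Inr x"
  shows "f v = Inl x \<or> f v = Inr x \<or> (x \<le> 1 \<and> f v \<in> {Inl 0, Inr 0, Inl 1, Inr 1})"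
proof -
  have v: "v \<in> fg_V {0..t}" using assms by auto
  then have "f v \<in> fg_V {0..t}" by (rule automorphism_in[OF aut])
  moreover have "copy_labeling (f v) = leaf_labeling x"
    using pres v assms(2) by (auto simp: copy_labeling_def)
  ultimately show ?thesis
    by (cases rule: fg_V_cases)
       (auto simp: copy_labeling_def leaf_labeling_eq_iff le_Suc_eq)
qed

lemma star_fg_aut_large:
  assumes i: "2 \<le> i" "i \<le> t"
  shows "f (Inl i) = Inl i \<and> f (Inr i) = Inr i"
proof -
  note edge = automorphism_edge[OF aut]
  have l: "f (Inl i) = Inl i"
  proof (rule ccontr)
    assume "f (Inl i) \<noteq> Inl i"
    then have fi: "f (Inl i) = Inr i" using star_fg_aut_copies[of i "Inl i"] i by auto
    have "{f (Inl i), f (Inl 0)} \<in> star_fg_edges t" "{f (Inl i), f (Inr 0)} \<in> star_fg_edges t"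
      using i by (intro edge; auto simp: star_fg_edge_iff)+
    then have "f (Inl 0) = f (Inr 0)" using star_fg_pendant[of i t] i fi by auto
    with automorphism_inj[OF aut, of "Inl 0" "Inr 0"] show False by simp
  qed
  moreover have "f (Inr i) \<noteq> f (Inl i)"
    using automorphism_inj[OF aut, of "Inr i" "Inl i"] i by simp
  ultimately show ?thesis using star_fg_aut_copies[of i "Inr i"] i by auto
qed

lemma star_fg_aut_fixes:
  assumes "v \<in> fg_V {0..t}"
  shows "f v = v"
proof -
  note edge = automorphism_edge[OF aut] and inj = automorphism_inj[OF aut]
  have fixed2: "f (Inl 2) = Inl 2" "f (Inr 2) = Inr 2" using star_fg_aut_large[of 2] t by auto
  have "{Inr 2, f (Inr 0)} \<in> star_fg_edges t"
    using edge[of "Inr 2" "Inr 0"] fixed2 t by (auto simp: star_fg_edge_iff)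
  then have r0: "f (Inr 0) = Inr 0" using star_fg_pendant[of 2 t] t by auto
  have "{Inl 2, f (Inl 0)} \<in> star_fg_edges t"
    using edge[of "Inl 2" "Inl 0"] fixed2 t by (auto simp: star_fg_edge_iff)
  moreover have "f (Inl 0) \<noteq> Inr 0" using inj[of "Inl 0" "Inr 0"] r0 by simp
  ultimately have l0: "f (Inl 0) = Inl 0" using t by (auto simp: star_fg_edge_iff)
  have "{f (Inl 1), Inl 0} \<in> star_fg_edges t"
    using edge[of "Inl 1" "Inl 0"] l0 t by (auto simp: star_fg_edge_iff)
  moreover have "f (Inl 1) \<noteq> Inr 0" "f (Inl 1) \<noteq> Inl 0"
    using inj[of "Inl 1" "Inr 0"] inj[of "Inl 1" "Inl 0"] r0 l0 t by auto
  ultimately have l1: "f (Inl 1) = Inl 1"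
    using star_fg_aut_copies[of 1 "Inl 1"] t by (auto simp: star_fg_edge_iff)
  have "f (Inr 1) \<notin> {Inl 0, Inr 0, Inl 1}"
    using inj[of "Inr 1" "Inl 0"] inj[of "Inr 1" "Inr 0"] inj[of "Inr 1" "Inl 1"] l0 r0 l1 t
    by auto
  then have r1: "f (Inr 1) = Inr 1" using star_fg_aut_copies[of 1 "Inr 1"] t by auto
  from assms obtain x where "x \<le> t" "v = Inl x \<or> v = Inr x"
    by (auto elim: fg_V_cases)
  then consider "x = 0" | "x = 1" | "2 \<le> x" "x \<le> t" by linarith
  then show ?thesis
    using \<open>v = Inl x \<or> v = Inr x\<close> l0 r0 l1 r1 star_fg_aut_large by cases auto
qed

end

lemma Dist_star_fg:
  assumes "2 \<le> t"
  shows "Dist (fg_V {0..t}) (star_fg_edges t) = t"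
proof (rule Dist_eqI)
  show "\<forall>v\<in>fg_V {0..t}. copy_labeling v \<in> {1..t}"
    using assms by (auto simp: copy_labeling_def leaf_labeling_def elim!: fg_V_cases)
  show "distinguishing (fg_V {0..t}) (star_fg_edges t) copy_labeling"
    unfolding distinguishing_def using star_fg_aut_fixes[OF assms] by blast
  fix s c assume "s < t" and c: "\<forall>v\<in>fg_V {0..t}. c v \<in> {1..s}"
  show "\<not> distinguishing (fg_V {0..t}) (star_fg_edges t) c"
  proof (rule not_distinguishing_if_many_twins[of "Inr ` {1..t}", OF _ _ _ _ c])
    show "s < card (Inr ` {1..t} :: (nat + nat) set)"
      using \<open>s < t\<close> by (simp add: card_image)
    fix a b :: "nat + nat" assume "a \<in> Inr ` {1..t}" "b \<in> Inr ` {1..t}"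
    then obtain i j where ij: "a = Inr i" "b = Inr j" "i \<in> {1..t}" "j \<in> {1..t}" by blast
    show "automorphism (fg_V {0..t}) (star_fg_edges t) (transpose a b)"
    proof (rule transpose_twins_automorphism)
      show "a \<in> fg_V {0..t}" "b \<in> fg_V {0..t}" using ij by auto
      show "{a} \<notin> star_fg_edges t" "{b} \<notin> star_fg_edges t"
        using star_fg_pendant[OF ij(3), of a] star_fg_pendant[OF ij(4), of b] ij by auto
      fix w
      show "{a, w} \<in> star_fg_edges t \<longleftrightarrow> {b, w} \<in> star_fg_edges t"
        unfolding ij(1,2) star_fg_pendant[OF ij(3)] star_fg_pendant[OF ij(4)] ..
    qed
  qed (auto simp: fg_V_def)
qed

theorem lemma2p6:
  fixes t :: nat
  assumes "t \<ge> 2"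
  shows "\<exists>(V :: nat set) E g. simple_graph V E \<and> connected_graph V E \<and> g ` V \<subseteq> V \<and>
           Dist V E = t \<and> Dist (fg_V V) (fg_E V E g) = t"
proof (intro exI conjI)
  show "simple_graph {0..t} (star_edges t)" by (rule simple_graph_star)
  show "connected_graph {0..t} (star_edges t)" by (rule connected_graph_star)
  show "(\<lambda>_. 0) ` {0..t} \<subseteq> {0..t}" by auto
  show "Dist {0..t} (star_edges t) = t" using Dist_star[OF assms] .
  show "Dist (fg_V {0..t}) (star_fg_edges t) = t" using Dist_star_fg[OF assms] .
qed

end
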